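(* Consider a population of $N$ units, $M$ of which have a certain attribute; $n$ units are drawn without replacement and $K$ is the number of drawn units having the attribute, so that $\Pr\{K=k\mid M\}=\binom Mk\binom{N-M}{n-k}/\binom Nn$, $k=0,1,\dots,n$. Let $I_K$ be the support of $K$, and let $\widehat M=\widehat M(k)$ be a function of $k\in I_K$ taking values in $\{m\in\mathbb{Z}:k\le m\le N\}$. Then $$\Pr\{K\le k\mid M\}\le\frac{\binom Mk\binom{N-M}{n-k}}{\binom{\widehat M}{k}\binom{N-\widehat M}{n-k}}\quad\text{for } k\in I_K\text{ such that }\widehat M(k)\le M,$$ $$\Pr\{K\ge k\mid M\}\le\frac{\binom Mk\binom{N-M}{n-k}}{\binom{\widehat M}{k}\binom{N-\widehat M}{n-k}}\quad\text{for } k\in I_K\text{ such that }\widehat M(k)\ge M.$$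
   Context: $\Pr\{\cdot\mid M\}$ denotes probability when the population contains $M$ units with the attribute. *)

theory Defs
  imports Complex_Main "HOL-Library.Extended_Nonnegative_Real"
begin

definition hyp_pmf :: "nat \<Rightarrow> nat \<Rightarrow> nat \<Rightarrow> nat \<Rightarrow> real" where
  "hyp_pmf N M n k =
     (if k \<le> n then real (M choose k) * real ((N - M) choose (n - k)) / real (N choose n) else 0)"

definition hyp_cdf :: "nat \<Rightarrow> nat \<Rightarrow> nat \<Rightarrow> nat \<Rightarrow> real" where
  "hyp_cdf N M n k = (\<Sum>j\<in>{0..k}. hyp_pmf N M n j)"

definition hyp_ccdf :: "nat \<Rightarrow> nat \<Rightarrow> nat \<Rightarrow> nat \<Rightarrow> real" where
  "hyp_ccdf N M n k = (\<Sum>j\<in>{k..n}. hyp_pmf N M n j)"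

definition hyp_support :: "nat \<Rightarrow> nat \<Rightarrow> nat \<Rightarrow> nat set" where
  "hyp_support N M n = {k. hyp_pmf N M n k > 0}"

text \<open>The likelihood ratio bound, as an extended nonnegative real
  (a positive number divided by 0 is \<infinity>).\<close>
definition lr_bound :: "nat \<Rightarrow> nat \<Rightarrow> nat \<Rightarrow> nat \<Rightarrow> nat \<Rightarrow> ennreal" where
  "lr_bound N M n k Mh =
     ennreal (real (M choose k) * real ((N - M) choose (n - k)))
     / ennreal (real (Mh choose k) * real ((N - Mh) choose (n - k)))"

end

theory Submission
  imports Defs
begin

text \<open>Write \<open>w\<^sub>m(j) = C(m,j) C(N-m,n-j)\<close>, so that \<open>Pr{K = j | M} = w\<^sub>M(j) / C(N,n)\<close>.
  The family \<open>w\<^sub>m\<close> has monotone likelihood ratio: \<open>w\<^sub>M(j) / w\<^sub>m(j)\<close> is nondecreasing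
  in \<open>j\<close> when \<open>m \<le> M\<close>. Hence for \<open>j \<le> k\<close> and \<open>m = Mhat(k) \<le> M\<close> we get
  \<open>w\<^sub>M(j) \<le> w\<^sub>M(k) w\<^sub>m(j) / w\<^sub>m(k)\<close>, and summing over \<open>j \<le> k\<close> with Vandermonde's
  identity \<open>\<Sum>\<^sub>j w\<^sub>m(j) = C(N,n)\<close> gives the lower tail bound; the upper tail is symmetric.\<close>

lemma Suc_times_choose_Suc: "Suc k * (a choose Suc k) = (a - k) * (a choose k)"
  by (metis binomial_absorption binomial_absorb_comp)

text \<open>Induction on \<open>k\<close>: the ratio \<open>C(a,k+1) / C(a,k) = (a-k)/(k+1)\<close> is nondecreasing in \<open>a\<close>.\<close>

lemma choose_cross_le:
  fixes a b j k :: nat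
  assumes "a \<le> b" "j \<le> k"
  shows "(b choose j) * (a choose k) \<le> (b choose k) * (a choose j)"
  using assms(2)
proof (induction k rule: dec_induct)
  case base
  then show ?case by (simp add: mult.commute)
next
  case (step k)
  have "Suc k * ((b choose j) * (a choose Suc k)) = (b choose j) * (a choose k) * (a - k)"
    by (simp only: mult.left_commute[of "Suc k"] Suc_times_choose_Suc) (simp add: ac_simps)
  also have "\<dots> \<le> (b choose k) * (a choose j) * (b - k)"
    using assms(1) by (intro mult_le_mono[OF step.IH]) simp
  also have "\<dots> = Suc k * ((b choose Suc k) * (a choose j))"
    by (simp only: mult.assoc[symmetric] Suc_times_choose_Suc) (simp add: ac_simps)
  finally show ?case
    by (simp only: mult_le_cancel1)
qed

definition hyp_weight :: "nat \<Rightarrow> nat \<Rightarrow> nat \<Rightarrow> nat \<Rightarrow> nat" where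
  "hyp_weight N M n j = (M choose j) * ((N - M) choose (n - j))"

lemma hyp_pmf_eq_hyp_weight:
  "j \<le> n \<Longrightarrow> hyp_pmf N M n j = real (hyp_weight N M n j) / real (N choose n)"
  by (simp add: hyp_pmf_def hyp_weight_def)

lemma lr_bound_eq_hyp_weight:
  "lr_bound N M n k Mh = ennreal (hyp_weight N M n k) / ennreal (hyp_weight N Mh n k)"
  by (simp add: lr_bound_def hyp_weight_def)

lemma hyp_support_iff:
  assumes "n \<le> N"
  shows "k \<in> hyp_support N M n \<longleftrightarrow> k \<le> n \<and> 0 < hyp_weight N M n k"
  using assms by (auto simp: hyp_support_def hyp_pmf_def hyp_weight_def zero_less_divide_iff
      simp flip: of_nat_mult)

lemma hyp_weight_cross_le:
  assumes "a \<le> b" "j \<le> k"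
  shows "hyp_weight N b n j * hyp_weight N a n k \<le> hyp_weight N b n k * hyp_weight N a n j"
proof -
  have "hyp_weight N b n j * hyp_weight N a n k
      = ((b choose j) * (a choose k)) * (((N - a) choose (n - k)) * ((N - b) choose (n - j)))"
    by (simp add: hyp_weight_def ac_simps)
  also have "\<dots> \<le> ((b choose k) * (a choose j)) * (((N - a) choose (n - j)) * ((N - b) choose (n - k)))"
    using assms by (intro mult_le_mono choose_cross_le) auto
  also have "\<dots> = hyp_weight N b n k * hyp_weight N a n j"
    by (simp add: hyp_weight_def ac_simps)
  finally show ?thesis .
qed

lemma sum_hyp_weight_le:
  assumes "M \<le> N" "S \<subseteq> {..n}"
  shows "(\<Sum>j\<in>S. hyp_weight N M n j) \<le> N choose n"
proof -
  have "(\<Sum>j\<in>S. hyp_weight N M n j) \<le> (\<Sum>j\<le>n. hyp_weight N M n j)"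
    using assms(2) by (intro sum_mono2) auto
  also have "\<dots> = N choose n"
    using vandermonde[of M "N - M" n] assms(1) by (simp add: hyp_weight_def)
  finally show ?thesis .
qed

lemma sum_div_le_ratio_of_cross_le:
  fixes f g :: "'a \<Rightarrow> real"
  assumes "finite S" "0 \<le> f k" "0 < g k" "0 < c"
    and cross: "\<And>j. j \<in> S \<Longrightarrow> f j * g k \<le> f k * g j"
    and sum_g: "sum g S \<le> c"
  shows "sum f S / c \<le> f k / g k"
proof -
  have "sum f S * g k \<le> f k * sum g S"
    using cross by (simp add: sum_distrib_left sum_distrib_right sum_mono)
  also have "\<dots> \<le> f k * c"
    using sum_g assms(2) by (rule mult_left_mono)
  finally show ?thesis
    using assms(3,4) by (simp add: divide_simps mult.commute)
qed

lemma hyp_prob_le_lr_bound: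
  assumes "Mh \<le> N" "n \<le> N" "k \<in> S" "S \<subseteq> {..n}" "0 < hyp_weight N M n k"
    and cross: "\<And>j. j \<in> S \<Longrightarrow>
      hyp_weight N M n j * hyp_weight N Mh n k \<le> hyp_weight N M n k * hyp_weight N Mh n j"
  shows "ennreal (\<Sum>j\<in>S. hyp_pmf N M n j) \<le> lr_bound N M n k Mh"
proof (cases "hyp_weight N Mh n k = 0")
  case True
  then show ?thesis
    using assms(5) by (simp add: lr_bound_eq_hyp_weight)
next
  case False
  have finite: "finite S"
    using assms(4) finite_subset by blast
  have "(\<Sum>j\<in>S. hyp_pmf N M n j) = (\<Sum>j\<in>S. real (hyp_weight N M n j)) / real (N choose n)"
    using assms(4) unfolding sum_divide_distrib by (intro sum.cong) (auto simp: hyp_pmf_eq_hyp_weight)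
  also have "\<dots> \<le> real (hyp_weight N M n k) / real (hyp_weight N Mh n k)"
  proof (rule sum_div_le_ratio_of_cross_le[OF finite])
    show "(\<Sum>j\<in>S. real (hyp_weight N Mh n j)) \<le> real (N choose n)"
      using sum_hyp_weight_le[OF assms(1,4)] by (simp flip: of_nat_sum)
  qed (use False assms(2) cross in \<open>auto simp flip: of_nat_mult\<close>)
  finally show ?thesis
    using False by (simp add: lr_bound_eq_hyp_weight divide_ennreal ennreal_leI)
qed

theorem corollary5:
  fixes N M n :: nat and Mhat :: "nat \<Rightarrow> nat"
  assumes "M \<le> N" and "n \<le> N"
    and "\<And>k. k \<in> hyp_support N M n \<Longrightarrow> k \<le> Mhat k \<and> Mhat k \<le> N"
  shows "(\<forall>k \<in> hyp_support N M n. Mhat k \<le> M \<longrightarrow>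
           ennreal (hyp_cdf N M n k) \<le> lr_bound N M n k (Mhat k))
       \<and> (\<forall>k \<in> hyp_support N M n. Mhat k \<ge> M \<longrightarrow>
           ennreal (hyp_ccdf N M n k) \<le> lr_bound N M n k (Mhat k))"
proof (intro conjI ballI impI)
  fix k assume k: "k \<in> hyp_support N M n" and "Mhat k \<le> M"
  then show "ennreal (hyp_cdf N M n k) \<le> lr_bound N M n k (Mhat k)"
    unfolding hyp_cdf_def using assms(2,3) hyp_support_iff[OF assms(2)]
    by (intro hyp_prob_le_lr_bound) (auto intro: hyp_weight_cross_le)
next
  fix k assume k: "k \<in> hyp_support N M n" and "M \<le> Mhat k"
  then show "ennreal (hyp_ccdf N M n k) \<le> lr_bound N M n k (Mhat k)"
    unfolding hyp_ccdf_def using assms(2,3) hyp_support_iff[OF assms(2)]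
      hyp_weight_cross_le[of M "Mhat k" k _ N n]
    by (intro hyp_prob_le_lr_bound) (auto simp: mult.commute)
qed

end
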